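(* Let $X,Y,Z$ be random variables on finite alphabets $\mathcal{X},\mathcal{Y},\mathcal{Z}$, and let $\operatorname{Un}(X\to Z\mid Y)$ be the unique information defined below. Then $\operatorname{Un}(X\to Z\mid Y)\le I(X;Z)$.
   Context: For each $y\in\mathcal{Y}$ with $\Pr(Y=y)>0$, let $(A_y,B_y,C_y)$ be the random triple on $\mathcal{X}\times\mathcal{Y}\times\mathcal{Z}$ with $\Pr(A_y=x,B_y=y',C_y=z)=0$ if $\Pr(Z=z)=0$ and $\Pr(A_y=x,B_y=y',C_y=z)=\Pr(X=x,Y=y',Z=z)\Pr(Z=z\mid Y=y)/\Pr(Z=z)$ otherwise. The unique information is $\operatorname{Un}(X\to Z\mid Y)=\sum_{y:\Pr(Y=y)>0}\Pr(Y=y)\,I(A_y;C_y)$, where $I$ is mutual information. *)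

theory Defs
  imports "HOL-Probability.Probability_Mass_Function"
begin

definition mutual_info :: "('a::finite \<times> 'b::finite \<Rightarrow> real) \<Rightarrow> real" where
  "mutual_info f =
     (\<Sum>a\<in>UNIV. \<Sum>b\<in>UNIV. if f (a, b) = 0 then 0
                  else f (a, b) * log (2::real) (f (a, b) / ((\<Sum>b'\<in>UNIV. f (a, b')) * (\<Sum>a'\<in>UNIV. f (a', b)))))"

definition PY :: "('x::finite \<times> 'y::finite \<times> 'z::finite) pmf \<Rightarrow> 'y \<Rightarrow> real" where
  "PY p y = (\<Sum>x\<in>UNIV. \<Sum>z\<in>UNIV. pmf p (x, y, z))"

definition PZ :: "('x::finite \<times> 'y::finite \<times> 'z::finite) pmf \<Rightarrow> 'z \<Rightarrow> real" where
  "PZ p z = (\<Sum>x\<in>UNIV. \<Sum>y\<in>UNIV. pmf p (x, y, z))"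

definition PYZ :: "('x::finite \<times> 'y::finite \<times> 'z::finite) pmf \<Rightarrow> 'y \<Rightarrow> 'z \<Rightarrow> real" where
  "PYZ p y z = (\<Sum>x\<in>UNIV. pmf p (x, y, z))"

definition PXZ :: "('x::finite \<times> 'y::finite \<times> 'z::finite) pmf \<Rightarrow> 'x \<times> 'z \<Rightarrow> real" where
  "PXZ p xz = (\<Sum>y\<in>UNIV. pmf p (fst xz, y, snd xz))"

definition tilt :: "('x::finite \<times> 'y::finite \<times> 'z::finite) pmf \<Rightarrow> 'y \<Rightarrow> 'x \<times> 'y \<times> 'z \<Rightarrow> real" where
  "tilt p y t = (case t of (x, y', z) \<Rightarrow>
      if PZ p z = 0 then 0
      else pmf p (x, y', z) * (PYZ p y z / PY p y) / PZ p z)"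

definition unique_info :: "('x::finite \<times> 'y::finite \<times> 'z::finite) pmf \<Rightarrow> real" where
  "unique_info p =
     (\<Sum>y\<in>{y. PY p y > 0}. PY p y * mutual_info (\<lambda>(x, z). \<Sum>y'\<in>UNIV. tilt p y (x, y', z)))"

end

theory Submission
  imports Defs
begin

text \<open>With the channel W(x|z) = P(x|z), the pair (A_y, C_y) is the output of W on the input
  distribution P(z|y), and averaging these inputs with weights P(y) gives back P(z), hence the
  pair (X, Z). So Un(X -> Z | Y) is an average of mutual informations of a fixed channel, and the
  claim is concavity of mutual information in the input distribution. That concavity comes from
  Gibbs' inequality in the form I(f) <= D(f || r \<otimes> f_B) + (sum r - 1) / ln 2 for any r, applied with
  r the X-marginal of the mixture: the right-hand side is affine in the input.\<close>

definition prod_divergence :: "('a::finite \<times> 'b::finite \<Rightarrow> real) \<Rightarrow> ('a \<Rightarrow> real) \<Rightarrow> real" where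
  "prod_divergence f r =
     (\<Sum>a\<in>UNIV. \<Sum>b\<in>UNIV. if f (a, b) = 0 then 0
                  else f (a, b) * log 2 (f (a, b) / (r a * (\<Sum>a'\<in>UNIV. f (a', b)))))"

lemma mutual_info_eq_prod_divergence:
  "mutual_info f = prod_divergence f (\<lambda>a. \<Sum>b\<in>UNIV. f (a, b))"
  unfolding mutual_info_def prod_divergence_def ..

lemma mutual_info_le_prod_divergence:
  fixes f :: "'a::finite \<times> 'b::finite \<Rightarrow> real" and r :: "'a \<Rightarrow> real"
  assumes f_nonneg: "\<And>ab. f ab \<ge> 0"
    and r_nonneg: "\<And>a. r a \<ge> 0"
    and r_nonzero: "\<And>a b. f (a, b) \<noteq> 0 \<Longrightarrow> r a \<noteq> 0"
  shows "mutual_info f \<le> prod_divergence f r + (\<Sum>a\<in>UNIV. r a - (\<Sum>b\<in>UNIV. f (a, b))) / ln 2"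
proof -
  define fA where "fA a = (\<Sum>b\<in>UNIV. f (a, b))" for a
  define fB where "fB b = (\<Sum>a\<in>UNIV. f (a, b))" for b
  have term_le: "(if f (a, b) = 0 then 0 else f (a, b) * log 2 (f (a, b) / (fA a * fB b)))
      \<le> (if f (a, b) = 0 then 0 else f (a, b) * log 2 (f (a, b) / (r a * fB b)))
         + f (a, b) * (r a - fA a) / (fA a * ln 2)" for a b
  proof (cases "f (a, b) = 0")
    case False
    then have f_pos: "f (a, b) > 0" using f_nonneg[of "(a, b)"] by simp
    have "f (a, b) \<le> fA a" unfolding fA_def
      by (rule member_le_sum[where f = "\<lambda>b. f (a, b)"]) (auto simp: f_nonneg)
    moreover have "f (a, b) \<le> fB b" unfolding fB_def
      by (rule member_le_sum[where f = "\<lambda>a. f (a, b)"]) (auto simp: f_nonneg)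
    moreover have "r a > 0" using r_nonzero[OF False] r_nonneg[of a] by simp
    ultimately have pos: "fA a > 0" "fB b > 0" "r a > 0" using f_pos by auto
    have "log 2 (r a) - log 2 (fA a) = (ln (r a) - ln (fA a)) / ln 2"
      by (simp add: log_def diff_divide_distrib)
    also have "\<dots> \<le> (r a - fA a) / (fA a * ln 2)"
      using divide_right_mono[OF ln_diff_le[OF pos(3,1)], of "ln 2"] by simp
    finally have "log 2 (r a) - log 2 (fA a) \<le> (r a - fA a) / (fA a * ln 2)" .
    then have "f (a, b) * (log 2 (r a) - log 2 (fA a)) \<le> f (a, b) * ((r a - fA a) / (fA a * ln 2))"
      using f_pos by (intro mult_left_mono) auto
    with False f_pos pos show ?thesis
      by (simp add: log_divide_pos log_mult_pos algebra_simps)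
  qed simp
  have row_le: "(\<Sum>b\<in>UNIV. f (a, b) * (r a - fA a) / (fA a * ln 2)) \<le> (r a - fA a) / ln 2" for a
  proof (cases "fA a = 0")
    case True
    then show ?thesis using r_nonneg[of a] by simp
  next
    case False
    have "(\<Sum>b\<in>UNIV. f (a, b) * (r a - fA a) / (fA a * ln 2)) = fA a * (r a - fA a) / (fA a * ln 2)"
      unfolding fA_def by (simp add: sum_divide_distrib[symmetric] sum_distrib_right[symmetric])
    with False show ?thesis by simp
  qed
  have "mutual_info f \<le> (\<Sum>a\<in>UNIV. \<Sum>b\<in>UNIV.
          (if f (a, b) = 0 then 0 else f (a, b) * log 2 (f (a, b) / (r a * fB b)))
           + f (a, b) * (r a - fA a) / (fA a * ln 2))"
    unfolding mutual_info_def fA_def[symmetric] fB_def[symmetric]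
    by (intro sum_mono term_le)
  also have "\<dots> \<le> prod_divergence f r + (\<Sum>a\<in>UNIV. (r a - fA a) / ln 2)"
    unfolding prod_divergence_def fB_def[symmetric]
    by (simp only: sum.distrib) (intro add_left_mono sum_mono row_le)
  finally show ?thesis by (simp add: fA_def sum_divide_distrib)
qed

lemma prod_divergence_channel:
  fixes W :: "'a::finite \<Rightarrow> 'b::finite \<Rightarrow> real" and v :: "'b \<Rightarrow> real"
  shows "prod_divergence (\<lambda>(a, b). W a b * v b) r =
    (\<Sum>a\<in>UNIV. \<Sum>b\<in>UNIV. W a b * v b *
       (if W a b = 0 then 0 else log 2 (W a b / (r a * (\<Sum>a'\<in>UNIV. W a' b)))))"
  unfolding prod_divergence_def
  by (intro sum.cong refl) (auto simp: sum_distrib_right[symmetric])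

theorem mutual_info_concave_input:
  fixes W :: "'a::finite \<Rightarrow> 'b::finite \<Rightarrow> real" and u :: "'i \<Rightarrow> 'b \<Rightarrow> real"
    and w :: "'i \<Rightarrow> real"
  assumes "finite I"
    and W_nonneg: "\<And>a b. W a b \<ge> 0"
    and u_nonneg: "\<And>i b. i \<in> I \<Longrightarrow> u i b \<ge> 0"
    and w_nonneg: "\<And>i. i \<in> I \<Longrightarrow> w i \<ge> 0"
    and w_sum: "sum w I = 1"
  shows "(\<Sum>i\<in>I. w i * mutual_info (\<lambda>(a, b). W a b * u i b))
      \<le> mutual_info (\<lambda>(a, b). W a b * (\<Sum>i\<in>I. w i * u i b))"
proof -
  define m where "m b = (\<Sum>i\<in>I. w i * u i b)" for b
  define r where "r a = (\<Sum>b\<in>UNIV. W a b * m b)" for a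
  define L where "L a b = (if W a b = 0 then 0 else log 2 (W a b / (r a * (\<Sum>a'\<in>UNIV. W a' b))))"
    for a b
  define upper where "upper i = (\<Sum>a\<in>UNIV. \<Sum>b\<in>UNIV. W a b * u i b * L a b)
      + (\<Sum>a\<in>UNIV. r a - (\<Sum>b\<in>UNIV. W a b * u i b)) / ln 2" for i
  have m_ge: "m b \<ge> w i * u i b" if "i \<in> I" for i b
    unfolding m_def using \<open>finite I\<close> that
    by (intro member_le_sum) (auto intro: mult_nonneg_nonneg w_nonneg u_nonneg)
  have m_nonneg: "m b \<ge> 0" for b
    unfolding m_def by (auto intro!: sum_nonneg mult_nonneg_nonneg w_nonneg u_nonneg)
  have r_nonneg: "r a \<ge> 0" for a
    unfolding r_def by (auto intro!: sum_nonneg mult_nonneg_nonneg W_nonneg m_nonneg)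
  have bound: "w i * mutual_info (\<lambda>(a, b). W a b * u i b) \<le> w i * upper i" if "i \<in> I" for i
  proof (cases "w i = 0")
    case False
    have r_nonzero: "r a \<noteq> 0" if "W a b * u i b \<noteq> 0" for a b
    proof -
      have "0 < W a b * (w i * u i b)"
        using that False W_nonneg[of a b] u_nonneg[OF \<open>i \<in> I\<close>, of b] w_nonneg[OF \<open>i \<in> I\<close>]
        by (simp add: less_le)
      also have "\<dots> \<le> W a b * m b" by (intro mult_left_mono m_ge \<open>i \<in> I\<close> W_nonneg)
      also have "\<dots> \<le> r a" unfolding r_def
        by (rule member_le_sum) (auto intro: mult_nonneg_nonneg W_nonneg m_nonneg)
      finally show ?thesis by simp
    qed
    have "mutual_info (\<lambda>(a, b). W a b * u i b)
        \<le> prod_divergence (\<lambda>(a, b). W a b * u i b) r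
          + (\<Sum>a\<in>UNIV. r a - (\<Sum>b\<in>UNIV. W a b * u i b)) / ln 2"
      using mutual_info_le_prod_divergence[of "\<lambda>(a, b). W a b * u i b" r]
      by (simp add: split_beta r_nonzero r_nonneg W_nonneg u_nonneg \<open>i \<in> I\<close>)
    then have "mutual_info (\<lambda>(a, b). W a b * u i b) \<le> upper i"
      by (simp add: upper_def L_def prod_divergence_channel)
    then show ?thesis using w_nonneg[OF \<open>i \<in> I\<close>] by (rule mult_left_mono)
  qed simp
  have cross_mix: "(\<Sum>i\<in>I. w i * (\<Sum>a\<in>UNIV. \<Sum>b\<in>UNIV. W a b * u i b * L a b))
      = (\<Sum>a\<in>UNIV. \<Sum>b\<in>UNIV. W a b * m b * L a b)"
    by (simp add: m_def sum_distrib_left sum_distrib_right sum.swap[of _ I] mult_ac)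
  have total_mix: "(\<Sum>i\<in>I. w i * (\<Sum>a\<in>UNIV. \<Sum>b\<in>UNIV. W a b * u i b)) = (\<Sum>a\<in>UNIV. r a)"
    by (simp add: r_def m_def sum_distrib_left sum.swap[of _ I] mult_ac)
  have marginal_mix: "(\<Sum>i\<in>I. w i * (\<Sum>a\<in>UNIV. r a - (\<Sum>b\<in>UNIV. W a b * u i b)) / ln 2) = 0"
    using total_mix
    by (simp add: w_sum sum_subtractf right_diff_distrib sum_distrib_right[symmetric]
        sum_divide_distrib[symmetric])
  have "(\<Sum>i\<in>I. w i * mutual_info (\<lambda>(a, b). W a b * u i b)) \<le> (\<Sum>i\<in>I. w i * upper i)"
    by (intro sum_mono bound)
  also have "\<dots> = (\<Sum>a\<in>UNIV. \<Sum>b\<in>UNIV. W a b * m b * L a b)"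
    unfolding upper_def distrib_left sum.distrib cross_mix
    using marginal_mix by (simp add: mult.assoc)
  also have "\<dots> = mutual_info (\<lambda>(a, b). W a b * m b)"
    by (simp add: mutual_info_eq_prod_divergence prod_divergence_channel L_def r_def[symmetric])
  finally show ?thesis unfolding m_def .
qed

definition PX_given_Z :: "('x::finite \<times> 'y::finite \<times> 'z::finite) pmf \<Rightarrow> 'x \<Rightarrow> 'z \<Rightarrow> real" where
  "PX_given_Z p x z = PXZ p (x, z) / PZ p z"

definition PZ_given_Y :: "('x::finite \<times> 'y::finite \<times> 'z::finite) pmf \<Rightarrow> 'y \<Rightarrow> 'z \<Rightarrow> real" where
  "PZ_given_Y p y z = PYZ p y z / PY p y"

lemma PY_nonneg: "PY p y \<ge> 0"
  unfolding PY_def by (simp add: sum_nonneg)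

lemma PZ_nonneg: "PZ p z \<ge> 0"
  unfolding PZ_def by (simp add: sum_nonneg)

lemma PX_given_Z_nonneg: "PX_given_Z p x z \<ge> 0"
  unfolding PX_given_Z_def PXZ_def by (simp add: sum_nonneg PZ_nonneg)

lemma PZ_given_Y_nonneg: "PZ_given_Y p y z \<ge> 0"
  unfolding PZ_given_Y_def PYZ_def by (simp add: sum_nonneg PY_nonneg)

lemma sum_PY: "(\<Sum>y\<in>UNIV. PY p y) = 1"
proof -
  have "(\<Sum>y\<in>UNIV. PY p y) = (\<Sum>x\<in>UNIV. \<Sum>y\<in>UNIV. \<Sum>z\<in>UNIV. pmf p (x, y, z))"
    unfolding PY_def by (rule sum.swap)
  also have "\<dots> = (\<Sum>t\<in>UNIV \<times> UNIV \<times> UNIV. pmf p t)"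
    by (simp only: sum.cartesian_product')
  also have "\<dots> = 1"
    by (rule sum_pmf_eq_1) auto
  finally show ?thesis .
qed

lemma PZ_eq_sum_PXZ: "PZ p z = (\<Sum>x\<in>UNIV. PXZ p (x, z))"
  unfolding PZ_def PXZ_def by simp

lemma PZ_eq_sum_PYZ: "PZ p z = (\<Sum>y\<in>UNIV. PYZ p y z)"
  unfolding PZ_def PYZ_def by (rule sum.swap)

lemma PY_eq_sum_PYZ: "PY p y = (\<Sum>z\<in>UNIV. PYZ p y z)"
  unfolding PY_def PYZ_def by (rule sum.swap)

lemma PXZ_eq_PX_given_Z: "PXZ p (x, z) = PX_given_Z p x z * PZ p z"
proof (cases "PZ p z = 0")
  case True
  then show ?thesis
    unfolding PZ_eq_sum_PXZ PXZ_def by (simp add: sum_nonneg sum_nonneg_eq_0_iff)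
qed (simp add: PX_given_Z_def)

lemma PYZ_eq_PZ_given_Y: "PYZ p y z = PY p y * PZ_given_Y p y z"
proof (cases "PY p y = 0")
  case True
  then show ?thesis
    unfolding PY_eq_sum_PYZ PYZ_def by (simp add: sum_nonneg sum_nonneg_eq_0_iff)
qed (simp add: PZ_given_Y_def)

lemma PZ_eq_mixture: "PZ p z = (\<Sum>y\<in>UNIV. PY p y * PZ_given_Y p y z)"
  unfolding PZ_eq_sum_PYZ PYZ_eq_PZ_given_Y ..

lemma sum_tilt: "(\<Sum>y'\<in>UNIV. tilt p y (x, y', z)) = PX_given_Z p x z * PZ_given_Y p y z"
proof (cases "PZ p z = 0")
  case False
  then show ?thesis
    by (simp add: tilt_def PX_given_Z_def PZ_given_Y_def PXZ_def sum_divide_distrib[symmetric]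
        sum_distrib_right[symmetric])
qed (simp add: tilt_def PX_given_Z_def)

lemma unique_info_eq_mixture:
  "unique_info p = (\<Sum>y\<in>UNIV. PY p y * mutual_info (\<lambda>(x, z). PX_given_Z p x z * PZ_given_Y p y z))"
  unfolding unique_info_def sum_tilt
  by (rule sum.mono_neutral_left) (auto simp: less_le PY_nonneg)

theorem lemma4:
  fixes p :: "('x::finite \<times> 'y::finite \<times> 'z::finite) pmf"
  shows "unique_info p \<le> mutual_info (PXZ p)"
proof -
  have "unique_info p
      = (\<Sum>y\<in>UNIV. PY p y * mutual_info (\<lambda>(x, z). PX_given_Z p x z * PZ_given_Y p y z))"
    by (rule unique_info_eq_mixture)
  also have "\<dots> \<le> mutual_info (\<lambda>(x, z). PX_given_Z p x z * (\<Sum>y\<in>UNIV. PY p y * PZ_given_Y p y z))"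
    by (rule mutual_info_concave_input)
      (simp_all add: PX_given_Z_nonneg PZ_given_Y_nonneg PY_nonneg sum_PY)
  also have "(\<lambda>(x, z). PX_given_Z p x z * (\<Sum>y\<in>UNIV. PY p y * PZ_given_Y p y z)) = PXZ p"
    by (auto simp: PXZ_eq_PX_given_Z PZ_eq_mixture)
  finally show ?thesis .
qed

end
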